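(* Let $(S,\cdot)$ be a discrete semigroup, let $\mathcal{F}$ be a filter on $S$ such that $\overline{\mathcal{F}}$ is a subsemigroup of $\beta S$, and let $(X,\langle T_s\rangle_{s\in S})$ be a dynamical system. Then $x,y\in X$ are $\mathcal{F}$-proximal if and only if there is some $p\in\overline{\mathcal{F}}$ such that $T_p(x)=T_p(y)$.
   Context: $\beta S$ is the Stone–Čech compactification of $S$ (ultrafilters on $S$) with the extended operation making it a compact right topological semigroup ($A\in pq$ iff $\{x\in S:x^{-1}A\in q\}\in p$). $\overline{\mathcal{F}}=\bigcap_{F\in\mathcal{F}}\overline{F}$ is the set of ultrafilters containing $\mathcal{F}$. A dynamical system $(X,\langle T_s\rangle_{s\in S})$: $X$ compact Hausdorff, each $T_s:X\to X$ continuous, $T_s\circ T_t=T_{st}$. For $p\in\beta S$, $T_p:X\to X$ is defined by $T_p(x)=p\text{-}\lim_{s\in S}T_s(x)$ (equivalently $T_p=\tilde\theta(p)$, where $\tilde\theta$ is the continuous extension to $\beta S$ of $s\mapsto T_s\in X^X$); one has $T_p\circ T_q=T_{pq}$. Points $x,y\in X$ are $\mathcal{F}$-proximal if for every neighbourhood $U$ of the diagonal in $X\times X$ and every $F\in\mathcal{F}$ there is $s\in F$ with $(T_s(x),T_s(y))\in U$. *)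

theory Defs
  imports "HOL-Analysis.Analysis"
begin

text \<open>Ultrafilters on a type (points of the Stone-Cech compactification beta S).\<close>
definition is_ultrafilter :: "'a filter \<Rightarrow> bool" where
  "is_ultrafilter p \<longleftrightarrow> p \<noteq> bot \<and>
     (\<forall>A. eventually (\<lambda>s. s \<in> A) p \<or> eventually (\<lambda>s. s \<notin> A) p)"

definition beta_mult :: "'a::semigroup_mult filter \<Rightarrow> 'a filter \<Rightarrow> 'a filter" where
  "beta_mult p q = Abs_filter (\<lambda>P. eventually (\<lambda>x. eventually (\<lambda>y. P (x * y)) q) p)"

lemma eventually_beta_mult:
  "eventually P (beta_mult p q) \<longleftrightarrow> eventually (\<lambda>x. eventually (\<lambda>y. P (x * y)) q) p"
proof -
  have "is_filter (\<lambda>P. eventually (\<lambda>x. eventually (\<lambda>y. P (x * y)) q) p)"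
  proof
    show "eventually (\<lambda>x. eventually (\<lambda>y. True) q) p" by simp
  next
    fix P Q
    assume "eventually (\<lambda>x. eventually (\<lambda>y. P (x * y)) q) p"
      "eventually (\<lambda>x. eventually (\<lambda>y. Q (x * y)) q) p"
    then show "eventually (\<lambda>x. eventually (\<lambda>y. P (x * y) \<and> Q (x * y)) q) p"
      by (auto elim: eventually_elim2 intro: eventually_conj)
  next
    fix P Q :: "'a \<Rightarrow> bool"
    assume PQ: "\<forall>x. P x \<longrightarrow> Q x"
      and ev: "eventually (\<lambda>x. eventually (\<lambda>y. P (x * y)) q) p"
    have "\<And>x. eventually (\<lambda>y. P (x * y)) q \<Longrightarrow> eventually (\<lambda>y. Q (x * y)) q"
      using PQ by (auto elim: eventually_mono)
    then show "eventually (\<lambda>x. eventually (\<lambda>y. Q (x * y)) q) p"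
      using ev by (auto elim: eventually_mono)
  qed
  then show ?thesis unfolding beta_mult_def by (simp add: eventually_Abs_filter)
qed

text \<open>closure of F in beta S: the ultrafilters containing F (p contains F iff p \<le> F).\<close>
definition filter_closure :: "'a filter \<Rightarrow> 'a filter set" where
  "filter_closure F = {p. is_ultrafilter p \<and> p \<le> F}"

definition dynamical_system :: "('a::semigroup_mult \<Rightarrow> 'b::t2_space \<Rightarrow> 'b) \<Rightarrow> bool" where
  "dynamical_system T \<longleftrightarrow> compact (UNIV :: 'b set) \<and> (\<forall>s. continuous_on UNIV (T s)) \<and>
     (\<forall>s t. T s \<circ> T t = T (s * t))"

definition T_beta :: "('a \<Rightarrow> 'b::t2_space \<Rightarrow> 'b) \<Rightarrow> 'a filter \<Rightarrow> 'b \<Rightarrow> 'b" where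
  "T_beta T p x = Lim p (\<lambda>s. T s x)"

definition F_proximal :: "'a filter \<Rightarrow> ('a \<Rightarrow> 'b::topological_space \<Rightarrow> 'b) \<Rightarrow> 'b \<Rightarrow> 'b \<Rightarrow> bool" where
  "F_proximal F T x y \<longleftrightarrow>
     (\<forall>U. (\<exists>V. open V \<and> (\<forall>z. (z, z) \<in> V) \<and> V \<subseteq> U) \<longrightarrow>
        (\<forall>A. eventually (\<lambda>s. s \<in> A) F \<longrightarrow> (\<exists>s\<in>A. (T s x, T s y) \<in> U)))"

end

theory Submission
  imports Defs
begin

(* Write f s = (T s x, T s y). For an ultrafilter p the p-limit of f is (T_p x, T_p y), so
   T_p x = T_p y says that this limit lies on the diagonal. If it does, f is p-eventually in
   every open neighbourhood of the diagonal, hence F-frequently there when p refines F: this is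
   F-proximality. Conversely, F-proximality says that F and the preimages under f of the open
   neighbourhoods of the diagonal generate a proper filter. An ultrafilter p refining it lies
   in the closure of F, and the p-limit of f (which exists by compactness) cannot be separated
   from the compact diagonal, so it lies on it. *)

lemma maximal_proper_filter_is_ultrafilter:
  assumes "U \<noteq> bot" and max: "\<And>G. G \<noteq> bot \<Longrightarrow> G \<le> U \<Longrightarrow> G = U"
  shows "is_ultrafilter U"
proof -
  have "eventually (\<lambda>s. s \<in> A) U" if "\<not> eventually (\<lambda>s. s \<notin> A) U" for A
  proof -
    have "inf U (principal A) \<noteq> bot"
      using that by (simp add: trivial_limit_def eventually_inf_principal)
    then have "U = inf U (principal A)"
      by (rule max[symmetric]) simp
    also have "eventually (\<lambda>s. s \<in> A) \<dots>"
      by (simp add: eventually_inf_principal)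
    finally show ?thesis .
  qed
  with \<open>U \<noteq> bot\<close> show ?thesis
    unfolding is_ultrafilter_def by blast
qed

lemma ex_maximal_proper_filter_le:
  fixes F :: "'a filter"
  assumes "F \<noteq> bot"
  shows "\<exists>U. U \<noteq> bot \<and> U \<le> F \<and> (\<forall>G. G \<noteq> bot \<and> G \<le> U \<longrightarrow> G = U)"
proof -
  let ?R = "{(G, H). H \<noteq> bot \<and> H \<le> G \<and> G \<le> F}"
  have field: "Field ?R = {G. G \<noteq> bot \<and> G \<le> F}"
    by (auto simp: Field_def bot_unique)
  have "\<exists>m\<in>Field ?R. \<forall>G\<in>Field ?R. (m, G) \<in> ?R \<longrightarrow> G = m"
  proof (rule Zorns_po_lemma)
    show "Partial_order ?R"
      by (auto simp: partial_order_on_def preorder_on_def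
          antisym_def refl_on_def trans_def Field_def bot_unique)
    show "\<exists>u\<in>Field ?R. \<forall>G\<in>C. (G, u) \<in> ?R" if C: "C \<in> Chains ?R" for C
    proof (cases "C = {}")
      case True
      with \<open>F \<noteq> bot\<close> show ?thesis
        by (auto simp: field)
    next
      case False
      have "Inf C = bot \<longleftrightarrow> (\<exists>G\<in>C. G = bot)"
        using C False unfolding trivial_limit_def
        by (intro eventually_Inf_base) (auto simp: Chains_def)
      then have "Inf C \<noteq> bot"
        using C by (auto simp: Chains_def)
      moreover obtain G where "G \<in> C"
        using False by blast
      ultimately show ?thesis
        using C by (intro bexI[of _ "Inf C"]) (auto intro: Inf_lower Inf_lower2 simp: Chains_def field)
    qed
  qed
  then show ?thesis
    by (auto simp: field)
qed

lemma ex_ultrafilter_le: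
  assumes "F \<noteq> bot"
  obtains p where "is_ultrafilter p" "p \<le> F"
proof -
  obtain U where "U \<noteq> bot" "U \<le> F" "\<forall>G. G \<noteq> bot \<and> G \<le> U \<longrightarrow> G = U"
    using ex_maximal_proper_filter_le[OF assms] by blast
  then have "is_ultrafilter U"
    by (intro maximal_proper_filter_is_ultrafilter) auto
  then show thesis
    using that \<open>U \<le> F\<close> by blast
qed

lemma ultrafilter_le_iff_inf_ne_bot:
  assumes "is_ultrafilter q"
  shows "q \<le> G \<longleftrightarrow> inf G q \<noteq> bot"
proof
  assume "q \<le> G"
  then show "inf G q \<noteq> bot"
    using assms by (simp add: inf_absorb2 is_ultrafilter_def)
next
  assume ne: "inf G q \<noteq> bot"
  show "q \<le> G"
  proof (rule filter_leI)
    fix P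
    assume "eventually P G"
    moreover have "eventually P q \<or> eventually (\<lambda>s. \<not> P s) q"
      using assms unfolding is_ultrafilter_def by (elim conjE allE[of _ "Collect P"]) simp
    ultimately show "eventually P q"
      using ne unfolding trivial_limit_def eventually_inf by blast
  qed
qed

lemma is_ultrafilter_filtermap:
  assumes "is_ultrafilter p"
  shows "is_ultrafilter (filtermap f p)"
proof -
  have "eventually (\<lambda>s. s \<in> f -` A) p \<or> eventually (\<lambda>s. s \<notin> f -` A) p" for A
    using assms unfolding is_ultrafilter_def by blast
  with assms show ?thesis
    by (simp add: is_ultrafilter_def filtermap_bot_iff eventually_filtermap)
qed

lemma ultrafilter_tendsto_Lim:
  fixes f :: "'a \<Rightarrow> 'b::t2_space"
  assumes "compact (UNIV :: 'b set)" and p: "is_ultrafilter p"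
  shows "(f \<longlongrightarrow> Lim p f) p"
proof -
  have "p \<noteq> bot"
    using p by (simp add: is_ultrafilter_def)
  then have "filtermap f p \<noteq> bot"
    by (simp add: filtermap_bot_iff)
  then obtain z where "inf (nhds z) (filtermap f p) \<noteq> bot"
    using assms(1) unfolding compact_filter by force
  then have "(f \<longlongrightarrow> z) p"
    unfolding filterlim_def
    using ultrafilter_le_iff_inf_ne_bot[OF is_ultrafilter_filtermap[OF p]] by blast
  with \<open>p \<noteq> bot\<close> show ?thesis
    by (simp add: tendsto_Lim)
qed

lemma ultrafilter_Lim_Pair:
  fixes f :: "'a \<Rightarrow> 'b::t2_space" and g :: "'a \<Rightarrow> 'c::t2_space"
  assumes "compact (UNIV :: 'b set)" "compact (UNIV :: 'c set)" and p: "is_ultrafilter p"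
  shows "Lim p (\<lambda>s. (f s, g s)) = (Lim p f, Lim p g)"
  using p assms
  by (intro tendsto_Lim tendsto_Pair ultrafilter_tendsto_Lim) (auto simp: is_ultrafilter_def)

lemma Hausdorff_space_euclidean_t2: "Hausdorff_space (euclidean :: 'a::t2_space topology)"
  by (simp add: Hausdorff_space_def disjnt_def separation_t2)

definition nhds_set :: "'a::topological_space set \<Rightarrow> 'a filter" where
  "nhds_set K = (INF V\<in>{V. open V \<and> K \<subseteq> V}. principal V)"

lemma eventually_nhds_set:
  "eventually P (nhds_set K) \<longleftrightarrow> (\<exists>V. open V \<and> K \<subseteq> V \<and> (\<forall>z\<in>V. P z))"
proof -
  have "eventually P (nhds_set K) \<longleftrightarrow> (\<exists>V\<in>{V. open V \<and> K \<subseteq> V}. eventually P (principal V))"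
    unfolding nhds_set_def
  proof (rule eventually_INF_base)
    show "{V. open V \<and> K \<subseteq> V} \<noteq> {}"
      using open_UNIV by blast
    fix V W
    assume "V \<in> {V. open V \<and> K \<subseteq> V}" "W \<in> {V. open V \<and> K \<subseteq> V}"
    then show "\<exists>U\<in>{V. open V \<and> K \<subseteq> V}. principal U \<le> inf (principal V) (principal W)"
      by (intro bexI[of _ "V \<inter> W"]) auto
  qed
  then show ?thesis
    by (auto simp: eventually_principal)
qed

lemma inf_filtercomap_nhds_set_eq_bot_iff:
  "inf F (filtercomap g (nhds_set K)) = bot \<longleftrightarrow>
     (\<exists>V. open V \<and> K \<subseteq> V \<and> eventually (\<lambda>s. g s \<notin> V) F)"
proof
  assume "inf F (filtercomap g (nhds_set K)) = bot"
  then have "eventually (\<lambda>s. False) (inf F (filtercomap g (nhds_set K)))"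
    by simp
  then obtain Q R where Q: "eventually Q F" and R: "eventually R (filtercomap g (nhds_set K))"
    and QR: "\<forall>s. Q s \<and> R s \<longrightarrow> False"
    unfolding eventually_inf by blast
  from R obtain V where V: "open V" "K \<subseteq> V" "\<forall>s. g s \<in> V \<longrightarrow> R s"
    unfolding eventually_filtercomap eventually_nhds_set by blast
  moreover have "eventually (\<lambda>s. g s \<notin> V) F"
    using Q by (rule eventually_mono) (use QR V(3) in blast)
  ultimately show "\<exists>V. open V \<and> K \<subseteq> V \<and> eventually (\<lambda>s. g s \<notin> V) F"
    by blast
next
  assume "\<exists>V. open V \<and> K \<subseteq> V \<and> eventually (\<lambda>s. g s \<notin> V) F"
  then obtain V where "open V" "K \<subseteq> V" and notin: "eventually (\<lambda>s. g s \<notin> V) F"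
    by blast
  then have "eventually (\<lambda>z. z \<in> V) (nhds_set K)"
    by (auto simp: eventually_nhds_set)
  then have "eventually (\<lambda>s. g s \<in> V) (filtercomap g (nhds_set K))"
    by (rule eventually_filtercomapI)
  with notin have "eventually (\<lambda>s. False) (inf F (filtercomap g (nhds_set K)))"
    unfolding eventually_inf by blast
  then show "inf F (filtercomap g (nhds_set K)) = bot"
    by (simp add: eventually_False)
qed

lemma Lim_in_if_le_filtercomap_nhds_set:
  fixes g :: "'a \<Rightarrow> 'b::t2_space"
  assumes cpt: "compact (UNIV :: 'b set)" and "closed K"
    and p: "is_ultrafilter p" "p \<le> filtercomap g (nhds_set K)"
  shows "Lim p g \<in> K"
proof (rule ccontr)
  assume "Lim p g \<notin> K"
  moreover have "compact K"
    using compact_Int_closed[OF cpt \<open>closed K\<close>] by simp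
  ultimately obtain U W where UW: "open U" "open W" "Lim p g \<in> U" "K \<subseteq> W" "U \<inter> W = {}"
    using Hausdorff_space_compact_separation[OF Hausdorff_space_euclidean_t2, of "{Lim p g}" K]
    by (auto simp: disjnt_def)
  have "eventually (\<lambda>s. g s \<in> U) p"
    using ultrafilter_tendsto_Lim[OF cpt p(1)] UW(1,3) by (rule topological_tendstoD)
  moreover have "eventually (\<lambda>z. z \<in> W) (nhds_set K)"
    using UW(2,4) by (auto simp: eventually_nhds_set)
  then have "eventually (\<lambda>s. g s \<in> W) p"
    by (intro filter_leD[OF p(2)] eventually_filtercomapI)
  ultimately have "eventually (\<lambda>s. False) p"
    by eventually_elim (use UW(5) in auto)
  with p(1) show False
    by (simp add: is_ultrafilter_def)
qed

lemma ex_ultrafilter_Lim_in_iff_frequently: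
  fixes g :: "'a \<Rightarrow> 'b::t2_space"
  assumes cpt: "compact (UNIV :: 'b set)" and "closed K"
  shows "(\<exists>p. is_ultrafilter p \<and> p \<le> F \<and> Lim p g \<in> K) \<longleftrightarrow>
    (\<forall>V. open V \<longrightarrow> K \<subseteq> V \<longrightarrow> (\<exists>\<^sub>F s in F. g s \<in> V))"
proof
  assume "\<exists>p. is_ultrafilter p \<and> p \<le> F \<and> Lim p g \<in> K"
  then obtain p where p: "is_ultrafilter p" "p \<le> F" "Lim p g \<in> K"
    by blast
  show "\<forall>V. open V \<longrightarrow> K \<subseteq> V \<longrightarrow> (\<exists>\<^sub>F s in F. g s \<in> V)"
  proof (intro allI impI)
    fix V
    assume "open V" "K \<subseteq> V"
    moreover have "Lim p g \<in> V"
      using p(3) \<open>K \<subseteq> V\<close> by blast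
    ultimately have "eventually (\<lambda>s. g s \<in> V) p"
      by (intro topological_tendstoD[OF ultrafilter_tendsto_Lim[OF cpt p(1)]])
    then have "\<exists>\<^sub>F s in p. g s \<in> V"
      using p(1) by (simp add: eventually_frequently is_ultrafilter_def)
    then show "\<exists>\<^sub>F s in F. g s \<in> V"
      using p(2) by (auto simp: frequently_def dest: filter_leD)
  qed
next
  assume "\<forall>V. open V \<longrightarrow> K \<subseteq> V \<longrightarrow> (\<exists>\<^sub>F s in F. g s \<in> V)"
  then have "inf F (filtercomap g (nhds_set K)) \<noteq> bot"
    by (auto simp: inf_filtercomap_nhds_set_eq_bot_iff frequently_def)
  then obtain p where p: "is_ultrafilter p" "p \<le> inf F (filtercomap g (nhds_set K))"
    by (rule ex_ultrafilter_le)
  have "Lim p g \<in> K"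
    using p(2) by (intro Lim_in_if_le_filtercomap_nhds_set[OF cpt \<open>closed K\<close> p(1)]) simp
  with p show "\<exists>p. is_ultrafilter p \<and> p \<le> F \<and> Lim p g \<in> K"
    by auto
qed

lemma frequently_iff_ex_in_eventually_set:
  "(\<forall>A. eventually (\<lambda>s. s \<in> A) F \<longrightarrow> (\<exists>s\<in>A. P s)) \<longleftrightarrow> (\<exists>\<^sub>F s in F. P s)"
proof
  assume meets: "\<forall>A. eventually (\<lambda>s. s \<in> A) F \<longrightarrow> (\<exists>s\<in>A. P s)"
  show "\<exists>\<^sub>F s in F. P s"
    unfolding frequently_def
  proof
    assume "eventually (\<lambda>s. \<not> P s) F"
    then show False
      using spec[OF meets, of "{s. \<not> P s}"] by simp
  qed
next
  assume P: "\<exists>\<^sub>F s in F. P s"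
  show "\<forall>A. eventually (\<lambda>s. s \<in> A) F \<longrightarrow> (\<exists>s\<in>A. P s)"
  proof (intro allI impI)
    fix A
    assume "eventually (\<lambda>s. s \<in> A) F"
    with P have "\<exists>\<^sub>F s in F. s \<in> A \<and> P s"
      by (rule frequently_eventually_conj)
    then show "\<exists>s\<in>A. P s"
      by (auto dest: frequently_ex)
  qed
qed

lemma F_proximal_iff_frequently:
  "F_proximal F T x y \<longleftrightarrow>
     (\<forall>V. open V \<longrightarrow> range (\<lambda>z. (z, z)) \<subseteq> V \<longrightarrow> (\<exists>\<^sub>F s in F. (T s x, T s y) \<in> V))"
  unfolding F_proximal_def frequently_iff_ex_in_eventually_set
proof (intro iffI allI impI)
  fix V :: "('b \<times> 'b) set"
  assume prox: "\<forall>U. (\<exists>V. open V \<and> (\<forall>z. (z, z) \<in> V) \<and> V \<subseteq> U) \<longrightarrow>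
      (\<exists>\<^sub>F s in F. (T s x, T s y) \<in> U)"
    and "open V" "range (\<lambda>z. (z, z)) \<subseteq> V"
  then show "\<exists>\<^sub>F s in F. (T s x, T s y) \<in> V"
    using spec[OF prox, of V] by blast
next
  fix U :: "('b \<times> 'b) set"
  assume freq: "\<forall>V. open V \<longrightarrow> range (\<lambda>z. (z, z)) \<subseteq> V \<longrightarrow> (\<exists>\<^sub>F s in F. (T s x, T s y) \<in> V)"
    and "\<exists>V. open V \<and> (\<forall>z. (z, z) \<in> V) \<and> V \<subseteq> U"
  then obtain V where "open V" "range (\<lambda>z. (z, z)) \<subseteq> V" "V \<subseteq> U"
    by blast
  with freq show "\<exists>\<^sub>F s in F. (T s x, T s y) \<in> U"
    by (blast intro: frequently_elim1)
qed

theorem lemma10: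
  fixes F :: "'a::semigroup_mult filter"
    and T :: "'a \<Rightarrow> 'b::t2_space \<Rightarrow> 'b"
    and x y :: 'b
  assumes "F \<noteq> bot"
    and "\<forall>p\<in>filter_closure F. \<forall>q\<in>filter_closure F. beta_mult p q \<in> filter_closure F"
    and "dynamical_system T"
  shows "F_proximal F T x y \<longleftrightarrow> (\<exists>p\<in>filter_closure F. T_beta T p x = T_beta T p y)"
proof -
  have cpt: "compact (UNIV :: 'b set)"
    using assms(3) by (simp add: dynamical_system_def)
  then have cpt2: "compact (UNIV :: ('b \<times> 'b) set)"
    using compact_Times[OF cpt cpt] by simp
  have diagonal: "closed (range (\<lambda>z::'b. (z, z)))"
    using closed_diagonal by (simp add: full_SetCompr_eq[symmetric] image_def eq_commute)
  have Lim_eq: "Lim p (\<lambda>s. (T s x, T s y)) = (T_beta T p x, T_beta T p y)"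
    if "is_ultrafilter p" for p
    using ultrafilter_Lim_Pair[OF cpt cpt that] by (simp add: T_beta_def)
  have "F_proximal F T x y \<longleftrightarrow>
      (\<exists>p. is_ultrafilter p \<and> p \<le> F \<and> Lim p (\<lambda>s. (T s x, T s y)) \<in> range (\<lambda>z. (z, z)))"
    unfolding F_proximal_iff_frequently ex_ultrafilter_Lim_in_iff_frequently[OF cpt2 diagonal] ..
  also have "\<dots> \<longleftrightarrow> (\<exists>p\<in>filter_closure F. T_beta T p x = T_beta T p y)"
    by (auto simp: filter_closure_def Lim_eq)
  finally show ?thesis .
qed

end
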